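(* Let $T=2$, $d=1$. On a probability space $(\Omega,\mathcal F,\mathbb P)$ let $X,\varepsilon_1,\varepsilon_2$ be independent, with $X$ standard Gaussian, $\mathbb P(\varepsilon_1=-1/2)=\mathbb P(\varepsilon_1=4)=1/2$, $\mathbb P(\varepsilon_2=-1/2)=\mathbb P(\varepsilon_2=1/2)=1/2$. Let $\mathcal F_0$ be the $\sigma$-algebra of $\mathbb P$-null sets (and their complements), $\mathcal F_1=\mathcal F_0\vee\sigma(X,\varepsilon_1)$, $\mathcal F_2=\mathcal F_1\vee\sigma(\varepsilon_2)$. Let $\mathscr S=\{S^*,\tilde S,\bar S\}$ be real-valued adapted processes with increments $\Delta S^*_1=\varepsilon_1$, $\Delta S^*_2=\varepsilon_2$; $\Delta\tilde S_1=X$, $\Delta\tilde S_2=3-X$; $\Delta\bar S_1=3$, $\Delta\bar S_2=0$. Let $U(x)=\min\{\sqrt x,2\}$ for $x\ge0$ and $U(x)=-\infty$ for $x<0$, and $w_0=1$. Then $S^*\in\mathscr S^*$, and $$u(1):=\sup_{\phi\in\mathcal A(1)}\inf_{S\in\mathscr S}\mathbb E[U(W^S_2(1,\phi))]\le1<\tilde u(1):=\sup_{\phi\in\tilde{\mathcal A}(1)}\inf_{S\in\mathscr S}\mathbb E[U(W^S_2(1,\phi))],$$ where $\mathcal A(1)=\bigcap_{S\in\mathscr S}\{\phi:W^S_t(1,\phi)\ge0\text{ a.s. for }t=0,1,2\}$ and $\tilde{\mathcal A}(1)=\bigcap_{S\in\mathscr S}\{\phi:W^S_2(1,\phi)\ge0\text{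 a.s.}\}$.
   Context: Strategies are $\phi=(\phi_1,\phi_2)$ with $\phi_1$ $\mathcal F_0$-measurable (a.s. constant) real and $\phi_2$ an $\mathcal F_1$-measurable real random variable; $W^S_t(w,\phi)=w+\sum_{s=1}^t\phi_s\Delta S_s$. For a process $S$, $D_t^S(\omega)$ is the smallest affine subspace of $\mathbb R$ containing the support of the regular conditional distribution of $\Delta S_t$ given $\mathcal F_{t-1}$ at $\omega$. NA($S$): for every strategy $\phi$, $W_T^S(0,\phi)\ge0$ a.s. implies $W_T^S(0,\phi)=0$ a.s. $\mathscr S^*$ is the set of $S^*\in\mathscr S$ with NA($S^*$) and $D_t^S\subseteq D_t^{S^*}$ a.s. for all $S\in\mathscr S$ and $t\in\{1,2\}$. *)

theory Defs
  imports "HOL-Probability.Probability"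
begin

(* A process is represented by its increments dS :: nat => 'a => real  (dS t = Delta S_t, t = 1,2).
   A strategy is a pair (c, p): phi_1 = c (a real constant), phi_2 = p (a random variable). *)

definition F0 :: "'a measure \<Rightarrow> 'a measure" where
  "F0 M = sigma (space M) (null_sets M)"

definition gen_sets :: "'a measure \<Rightarrow> ('a \<Rightarrow> real) \<Rightarrow> 'a set set" where
  "gen_sets M Y = {Y -` B \<inter> space M | B. B \<in> sets borel}"

definition F1 :: "'a measure \<Rightarrow> ('a \<Rightarrow> real) \<Rightarrow> ('a \<Rightarrow> real) \<Rightarrow> 'a measure" where
  "F1 M X e1 = sigma (space M) (null_sets M \<union> gen_sets M X \<union> gen_sets M e1)"

definition F2 :: "'a measure \<Rightarrow> ('a \<Rightarrow> real) \<Rightarrow> ('a \<Rightarrow> real) \<Rightarrow> ('a \<Rightarrow> real) \<Rightarrow> 'a measure" where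
  "F2 M X e1 e2 = sigma (space M) (null_sets M \<union> gen_sets M X \<union> gen_sets M e1 \<union> gen_sets M e2)"

definition prev_filt :: "'a measure \<Rightarrow> ('a \<Rightarrow> real) \<Rightarrow> ('a \<Rightarrow> real) \<Rightarrow> nat \<Rightarrow> 'a measure" where
  "prev_filt M X e1 t = (if t = 1 then F0 M else F1 M X e1)"

definition is_strategy :: "'a measure \<Rightarrow> real \<times> ('a \<Rightarrow> real) \<Rightarrow> bool" where
  "is_strategy G phi \<longleftrightarrow> snd phi \<in> borel_measurable G"

definition strat_at :: "real \<times> ('a \<Rightarrow> real) \<Rightarrow> nat \<Rightarrow> 'a \<Rightarrow> real" where
  "strat_at phi s \<omega> = (if s = 1 then fst phi else snd phi \<omega>)"

definition wealth :: "(nat \<Rightarrow> 'a \<Rightarrow> real) \<Rightarrow> real \<Rightarrow> real \<times> ('a \<Rightarrow> real) \<Rightarrow> nat \<Rightarrow> 'a \<Rightarrow> real" where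
  "wealth dS w phi t \<omega> = w + (\<Sum>s\<in>{1..t}. strat_at phi s \<omega> * dS s \<omega>)"

definition NA :: "'a measure \<Rightarrow> 'a measure \<Rightarrow> (nat \<Rightarrow> 'a \<Rightarrow> real) \<Rightarrow> bool" where
  "NA M G dS \<longleftrightarrow> (\<forall>phi. is_strategy G phi \<longrightarrow>
       (AE \<omega> in M. wealth dS 0 phi 2 \<omega> \<ge> 0) \<longrightarrow> (AE \<omega> in M. wealth dS 0 phi 2 \<omega> = 0))"

definition is_rcd :: "'a measure \<Rightarrow> 'a measure \<Rightarrow> ('a \<Rightarrow> real) \<Rightarrow> ('a \<Rightarrow> real measure) \<Rightarrow> bool" where
  "is_rcd M G Y \<kappa> \<longleftrightarrow>
     (\<forall>\<omega>\<in>space M. prob_space (\<kappa> \<omega>) \<and> sets (\<kappa> \<omega>) = sets borel) \<and>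
     (\<forall>B\<in>sets borel. (\<lambda>\<omega>. measure (\<kappa> \<omega>) B) \<in> borel_measurable G \<and>
        (\<forall>A\<in>sets G. (LINT \<omega>:A|M. measure (\<kappa> \<omega>) B) = measure M (A \<inter> {\<omega>\<in>space M. Y \<omega> \<in> B})))"

definition supp :: "real measure \<Rightarrow> real set" where
  "supp \<mu> = {x. \<forall>e>0. emeasure \<mu> (ball x e) > 0}"

(* D_t^S is the affine hull of the support of the r.c.d.; "D^S_t \<subseteq> D^{S'}_t a.s." *)
definition D_incl :: "'a measure \<Rightarrow> 'a measure \<Rightarrow> ('a \<Rightarrow> real) \<Rightarrow> ('a \<Rightarrow> real) \<Rightarrow> bool" where
  "D_incl M G Y Y' \<longleftrightarrow> (\<forall>\<kappa> \<kappa>'. is_rcd M G Y \<kappa> \<longrightarrow> is_rcd M G Y' \<kappa>' \<longrightarrow>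
      (AE \<omega> in M. affine hull (supp (\<kappa> \<omega>)) \<subseteq> affine hull (supp (\<kappa>' \<omega>))))"

definition Sstar_set :: "'a measure \<Rightarrow> ('a \<Rightarrow> real) \<Rightarrow> ('a \<Rightarrow> real) \<Rightarrow> (nat \<Rightarrow> 'a \<Rightarrow> real) set
    \<Rightarrow> (nat \<Rightarrow> 'a \<Rightarrow> real) set" where
  "Sstar_set M X e1 \<S> = {dS'. dS' \<in> \<S> \<and> NA M (F1 M X e1) dS' \<and>
      (\<forall>dS\<in>\<S>. \<forall>t\<in>{1,2}. D_incl M (prev_filt M X e1 t) (dS t) (dS' t))}"

definition U :: "real \<Rightarrow> ereal" where
  "U x = (if x \<ge> 0 then ereal (min (sqrt x) 2) else -\<infinity>)"

definition eexp :: "'a measure \<Rightarrow> ('a \<Rightarrow> ereal) \<Rightarrow> ereal" where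
  "eexp M f = enn2ereal (\<integral>\<^sup>+\<omega>. e2ennreal (f \<omega>) \<partial>M) - enn2ereal (\<integral>\<^sup>+\<omega>. e2ennreal (- f \<omega>) \<partial>M)"

definition adm :: "'a measure \<Rightarrow> 'a measure \<Rightarrow> (nat \<Rightarrow> 'a \<Rightarrow> real) set \<Rightarrow> real \<Rightarrow> (real \<times> ('a \<Rightarrow> real)) set" where
  "adm M G \<S> w = {phi. is_strategy G phi \<and> (\<forall>dS\<in>\<S>. \<forall>t\<in>{0,1,2}. AE \<omega> in M. wealth dS w phi t \<omega> \<ge> 0)}"

definition adm_tilde :: "'a measure \<Rightarrow> 'a measure \<Rightarrow> (nat \<Rightarrow> 'a \<Rightarrow> real) set \<Rightarrow> real \<Rightarrow> (real \<times> ('a \<Rightarrow> real)) set" where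
  "adm_tilde M G \<S> w = {phi. is_strategy G phi \<and> (\<forall>dS\<in>\<S>. AE \<omega> in M. wealth dS w phi 2 \<omega> \<ge> 0)}"

definition robust_value :: "'a measure \<Rightarrow> (nat \<Rightarrow> 'a \<Rightarrow> real) set \<Rightarrow> real \<Rightarrow> (real \<times> ('a \<Rightarrow> real)) set \<Rightarrow> ereal" where
  "robust_value M \<S> w A = (SUP phi\<in>A. INF dS\<in>\<S>. eexp M (\<lambda>\<omega>. U (wealth dS w phi 2 \<omega>)))"

end

theory Submission
  imports Defs
begin

text \<open>The increments of \<open>S\<^sup>*\<close> are independent of the past and each charges two distinct
  points, so its conditional supports affinely span \<open>\<real>\<close> and contain every \<open>D\<^sup>S\<^sub>t\<close>.
  A hedge with \<open>c \<epsilon>\<^sub>1 + \<phi>\<^sub>2 \<epsilon>\<^sub>2 \<ge> 0\<close> must survive both signs of \<open>\<epsilon>\<^sub>2\<close>, i.e.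
  \<open>|\<phi>\<^sub>2|/2 \<le> c \<epsilon>\<^sub>1\<close>, and both signs of \<open>\<epsilon>\<^sub>1\<close> then force \<open>c = 0 = \<phi>\<^sub>2\<close>: this is NA.

  Nonnegative wealth at time 1 against the unbounded Gaussian increment \<open>X\<close> forces
  \<open>\<phi>\<^sub>1 \<le> 0\<close>, and then the deterministic market \<open>S\<close>-bar caps the utility at 1.
  Requiring nonnegativity only at the horizon admits \<open>\<phi> = (1, 1)\<close>, whose terminal wealth
  is 4 under \<open>S\<close>-tilde and \<open>S\<close>-bar and \<open>1 + \<epsilon>\<^sub>1 + \<epsilon>\<^sub>2\<close> under \<open>S\<^sup>*\<close>, with expected
  utility at least 5/4.\<close>

lemma gen_sets_Int_stable: "Int_stable (gen_sets M Y)"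
  unfolding Int_stable_def gen_sets_def
proof safe
  fix A B :: "real set" assume "A \<in> sets borel" "B \<in> sets borel"
  then show "\<exists>C. (Y -` A \<inter> space M) \<inter> (Y -` B \<inter> space M) = Y -` C \<inter> space M \<and> C \<in> sets borel"
    by (intro exI[of _ "A \<inter> B"]) auto
qed

lemma gen_sets_subset_Pow: "gen_sets M Y \<subseteq> Pow (space M)"
  unfolding gen_sets_def by auto

lemma gen_sets_subset_sets: "Y \<in> borel_measurable M \<Longrightarrow> gen_sets M Y \<subseteq> sets M"
  unfolding gen_sets_def by auto

lemma level_set_in_gen_sets: "{\<omega>\<in>space M. Y \<omega> = v} \<in> gen_sets M Y"
  unfolding gen_sets_def by (intro CollectI exI[of _ "{v}"]) auto

lemma null_sets_subset_Pow: "null_sets M \<subseteq> Pow (space M)"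
  using null_setsD2 sets.sets_into_space by blast

lemma space_F0 [simp]: "space (F0 M) = space M"
  unfolding F0_def by (simp add: space_measure_of_conv)

lemma sets_F0: "sets (F0 M) = sigma_sets (space M) (null_sets M)"
  unfolding F0_def by (rule sets_measure_of) (use null_sets_subset_Pow in auto)

lemma space_F1 [simp]: "space (F1 M X e1) = space M"
  unfolding F1_def by (simp add: space_measure_of_conv)

lemma sets_F1: "sets (F1 M X e1) = sigma_sets (space M) (null_sets M \<union> (gen_sets M X \<union> gen_sets M e1))"
  unfolding F1_def Un_assoc
  by (rule sets_measure_of) (use null_sets_subset_Pow[of M] gen_sets_subset_Pow[of M] in blast)

lemma gen_sets_subset_F1: "gen_sets M e1 \<subseteq> sets (F1 M X e1)"
  unfolding sets_F1 by (blast intro: sigma_sets.Basic)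

lemma measurable_F1: "e1 \<in> borel_measurable (F1 M X e1)"
proof (rule measurableI)
  fix A :: "real set" assume "A \<in> sets borel"
  then have "e1 -` A \<inter> space M \<in> gen_sets M e1" unfolding gen_sets_def by blast
  then show "e1 -` A \<inter> space (F1 M X e1) \<in> sets (F1 M X e1)"
    using gen_sets_subset_F1 by auto
qed simp

context prob_space
begin

lemma indep_set_F0:
  assumes "B \<subseteq> events" "Int_stable B"
  shows "indep_set (sets (F0 M)) (sigma_sets (space M) B)"
  unfolding sets_F0
proof (rule indep_set_sigma_sets)
  show "indep_set (null_sets M) B"
  proof (rule indep_setI)
    fix a b assume "a \<in> null_sets M" "b \<in> B"
    then have "a \<inter> b \<in> null_sets M" using assms(1) by (meson in_mono null_set_Int2)
    then show "prob (a \<inter> b) = prob a * prob b" using \<open>a \<in> null_sets M\<close>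
      by (simp add: measure_eq_0_null_sets)
  qed (use assms(1) in auto)
  show "Int_stable (null_sets M)" unfolding Int_stable_def by auto
qed fact

text \<open>Adjoining the null sets to a generator does not destroy independence: every set of the
  enlarged \<sigma>-algebra is a.e. equal to one of the original \<sigma>-algebra.\<close>

lemma indep_set_sigma_sets_null_sets:
  assumes A: "A \<subseteq> events" and B: "B \<subseteq> events" "Int_stable B"
    and indep: "indep_set (sigma_sets (space M) A) B"
  shows "indep_set (sigma_sets (space M) (null_sets M \<union> A)) (sigma_sets (space M) B)"
proof -
  define S where "S = sigma_sets (space M) A"
  define H where "H = {E \<in> events. \<exists>E'\<in>S. sym_diff E E' \<in> null_sets M}"
  interpret S: sigma_algebra "space M" S
    unfolding S_def using A sets.sets_into_space by (intro sigma_algebra_sigma_sets) auto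
  have S_events: "S \<subseteq> events"
    unfolding S_def using A by (rule sets.sigma_sets_subset)
  have H_indep: "indep_set H B"
  proof (rule indep_setI)
    fix a b assume a: "a \<in> H" and b: "b \<in> B"
    then obtain a' where a': "a' \<in> S" "sym_diff a a' \<in> null_sets M" "a \<in> events"
      unfolding H_def by auto
    have ae: "AE x in M. x \<in> a \<longleftrightarrow> x \<in> a'"
      using AE_not_in[OF a'(2)] by eventually_elim auto
    have "prob a = prob a'" "prob (a \<inter> b) = prob (a' \<inter> b)"
      using ae a' S_events b B by (auto intro!: measure_eq_AE)
    then show "prob (a \<inter> b) = prob a * prob b"
      using indep_setD[OF indep a'(1)[unfolded S_def] b] by simp
  qed (use B H_def in auto)
  have H_Int: "Int_stable H"
    unfolding Int_stable_def
  proof safe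
    fix a b assume "a \<in> H" "b \<in> H"
    then obtain a' b' where a': "a' \<in> S" "sym_diff a a' \<in> null_sets M" "a \<in> events"
      and b': "b' \<in> S" "sym_diff b b' \<in> null_sets M" "b \<in> events"
      unfolding H_def by auto
    have "a' \<inter> b' \<in> S"
      using a'(1) b'(1) by (rule S.Int)
    moreover have "sym_diff (a \<inter> b) (a' \<inter> b') \<in> null_sets M"
      by (rule null_sets_subset[OF null_sets.Un[OF a'(2) b'(2)]]) (use a' b' S_events in auto)
    ultimately show "a \<inter> b \<in> H"
      using a'(3) b'(3) unfolding H_def by blast
  qed
  have sub: "sigma_sets (space M) (null_sets M \<union> A) \<subseteq> sigma_sets (space M) H"
  proof (rule sigma_sets_subseteq, safe)
    fix N assume "N \<in> null_sets M"
    then show "N \<in> H" unfolding H_def by (auto intro!: bexI[of _ "{}"])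
  next
    fix E assume "E \<in> A"
    then show "E \<in> H" unfolding H_def S_def using A by (auto intro!: bexI[of _ E] sigma_sets.Basic)
  qed
  have "indep_set (sigma_sets (space M) H) (sigma_sets (space M) B)"
    using H_indep H_Int B(2) by (rule indep_set_sigma_sets)
  then show ?thesis
    unfolding indep_set_def by (rule indep_sets_mono_sets) (use sub in \<open>auto split: bool.split\<close>)
qed

lemma indep_set_F1:
  assumes X: "X \<in> borel_measurable M" and e1: "e1 \<in> borel_measurable M"
    and e2: "e2 \<in> borel_measurable M"
    and indep: "indep_vars (\<lambda>_. borel) (\<lambda>i. if i = 0 then X else if i = 1 then e1 else e2) {0::nat, 1, 2}"
  shows "indep_set (sets (F1 M X e1)) (sigma_sets (space M) (gen_sets M e2))"
proof -
  define Y where "Y = (\<lambda>i::nat. if i = 0 then X else if i = 1 then e1 else e2)"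
  define I where "I = (\<lambda>b::bool. if b then {0::nat, 1} else {2})"
  have "(\<Union>j. I j) = {0, 1, 2}"
    unfolding I_def by auto
  then have "indep_sets (\<lambda>i. gen_sets M (Y i)) (\<Union>j. I j)"
    using indep unfolding indep_vars_def2 Y_def[symmetric] gen_sets_def[symmetric] by simp
  then have "indep_sets (\<lambda>j. sigma_sets (space M) (\<Union>i\<in>I j. gen_sets M (Y i))) UNIV"
    by (rule indep_sets_collect_sigma)
      (auto simp: gen_sets_Int_stable disjoint_family_on_def I_def)
  also have "(\<lambda>j. sigma_sets (space M) (\<Union>i\<in>I j. gen_sets M (Y i))) =
      case_bool (sigma_sets (space M) (gen_sets M X \<union> gen_sets M e1)) (sigma_sets (space M) (gen_sets M e2))"
    by (rule ext) (auto simp: I_def Y_def split: bool.split)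
  finally have "indep_set (sigma_sets (space M) (gen_sets M X \<union> gen_sets M e1)) (gen_sets M e2)"
    unfolding indep_set_def by (rule indep_sets_mono_sets) (auto split: bool.split)
  then show ?thesis
    unfolding sets_F1 using gen_sets_subset_sets X e1 e2
    by (intro indep_set_sigma_sets_null_sets gen_sets_Int_stable) auto
qed

lemma prob_Int_level_set:
  assumes "indep_set (sets G) (sigma_sets (space M) (gen_sets M Y))" "A \<in> sets G"
  shows "prob (A \<inter> {\<omega>\<in>space M. Y \<omega> = v}) = prob A * prob {\<omega>\<in>space M. Y \<omega> = v}"
  using assms by (auto intro: indep_setD level_set_in_gen_sets)

lemma AE_ex_in_positive_event:
  assumes "AE \<omega> in M. P \<omega>" "prob {\<omega>\<in>space M. Q \<omega>} \<noteq> 0"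
  shows "\<exists>\<omega>\<in>space M. P \<omega> \<and> Q \<omega>"
proof (rule ccontr)
  assume "\<not> ?thesis"
  with assms(1) have "AE \<omega> in M. \<not> Q \<omega>" by (auto elim: AE_mp)
  with assms(2) show False by (simp add: prob_eq_0_AE)
qed

lemma AE_of_AE_on_independent_atom:
  assumes indep: "indep_set (sets G) (sigma_sets (space M) (gen_sets M Y))"
    and G: "space G = space M" and P: "{\<omega>\<in>space G. \<not> P \<omega>} \<in> sets G"
    and pos: "prob {\<omega>\<in>space M. Y \<omega> = v} \<noteq> 0"
    and AE: "AE \<omega> in M. Y \<omega> = v \<longrightarrow> P \<omega>"
  shows "AE \<omega> in M. P \<omega>"
proof -
  define N where "N = {\<omega>\<in>space M. \<not> P \<omega>}"
  have N_G: "N \<in> sets G" using P G by (simp add: N_def)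
  then have N_M: "N \<in> events" using indep_setD_ev1[OF indep] by auto
  have "AE \<omega> in M. \<not> (\<not> P \<omega> \<and> Y \<omega> = v)"
    using AE by auto
  moreover have "N \<inter> {\<omega>\<in>space M. Y \<omega> = v} = {\<omega>\<in>space M. \<not> P \<omega> \<and> Y \<omega> = v}"
    by (auto simp: N_def)
  ultimately have "prob (N \<inter> {\<omega>\<in>space M. Y \<omega> = v}) = 0"
    by (simp add: prob_eq_0_AE)
  then have "prob N = 0"
    using prob_Int_level_set[OF indep N_G] pos by simp
  then have "AE \<omega> in M. \<omega> \<notin> N"
    using prob_eq_0[OF N_M] by simp
  then show ?thesis
    by (auto simp: N_def elim: AE_mp)
qed

end

lemma wealth_1: "wealth dS w phi 1 \<omega> = w + fst phi * dS 1 \<omega>"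
  unfolding wealth_def strat_at_def by simp

lemma wealth_2: "wealth dS w phi 2 \<omega> = w + fst phi * dS 1 \<omega> + snd phi \<omega> * dS 2 \<omega>"
proof -
  have "{1..2::nat} = {1, 2}" by auto
  then show ?thesis unfolding wealth_def strat_at_def by simp
qed

lemma (in prob_space) NA_of_independent_symmetric_increment:
  assumes G: "space G = space M" and e1: "e1 \<in> borel_measurable G"
    and indep: "indep_set (sets G) (sigma_sets (space M) (gen_sets M e2))"
    and a: "a < 0" "prob {\<omega>\<in>space M. e1 \<omega> = a} \<noteq> 0"
    and b: "0 < b" "prob {\<omega>\<in>space M. e1 \<omega> = b} \<noteq> 0"
    and r: "0 < r" "prob {\<omega>\<in>space M. e2 \<omega> = - r} \<noteq> 0" "prob {\<omega>\<in>space M. e2 \<omega> = r} \<noteq> 0"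
    and dS: "dS 1 = e1" "dS 2 = e2"
  shows "NA M G dS"
  unfolding NA_def
proof (intro allI impI)
  fix phi :: "real \<times> ('a \<Rightarrow> real)"
  assume strat: "is_strategy G phi" and nonneg: "AE \<omega> in M. 0 \<le> wealth dS 0 phi 2 \<omega>"
  obtain c p where phi: "phi = (c, p)" by (cases phi)
  have p: "p \<in> borel_measurable G" using strat by (simp add: is_strategy_def phi)
  note [measurable] = e1 p
  have W: "wealth dS 0 phi 2 \<omega> = c * e1 \<omega> + p \<omega> * e2 \<omega>" for \<omega>
    unfolding wealth_2 phi dS by simp
  have at_atom: "AE \<omega> in M. 0 \<le> c * e1 \<omega> + p \<omega> * v"
    if "prob {\<omega>\<in>space M. e2 \<omega> = v} \<noteq> 0" for v
  proof (rule AE_of_AE_on_independent_atom[OF indep G _ that])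
    show "{\<omega>\<in>space G. \<not> 0 \<le> c * e1 \<omega> + p \<omega> * v} \<in> sets G" by measurable
    show "AE \<omega> in M. e2 \<omega> = v \<longrightarrow> 0 \<le> c * e1 \<omega> + p \<omega> * v"
      using nonneg by (auto simp: W elim: AE_mp)
  qed
  have bound: "AE \<omega> in M. \<bar>p \<omega>\<bar> * r \<le> c * e1 \<omega>"
    using at_atom[OF r(2)] at_atom[OF r(3)] by eventually_elim (simp add: abs_if)
  obtain \<omega>a where "\<bar>p \<omega>a\<bar> * r \<le> c * a"
    using AE_ex_in_positive_event[OF bound a(2)] by auto
  then have "0 \<le> c * a" by (rule order_trans[rotated]) (use r(1) in simp)
  then have "c \<le> 0" using a(1) by (simp add: zero_le_mult_iff)
  moreover obtain \<omega>b where "\<bar>p \<omega>b\<bar> * r \<le> c * b"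
    using AE_ex_in_positive_event[OF bound b(2)] by auto
  then have "0 \<le> c * b" by (rule order_trans[rotated]) (use r(1) in simp)
  then have "0 \<le> c" using b(1) by (simp add: zero_le_mult_iff)
  ultimately have "c = 0" by simp
  show "AE \<omega> in M. wealth dS 0 phi 2 \<omega> = 0"
    using bound by eventually_elim (use \<open>c = 0\<close> r(1) in \<open>simp add: W mult_le_0_iff\<close>)
qed

lemma in_supp_of_atom:
  assumes "sets \<mu> = sets borel" "measure \<mu> {v} \<noteq> 0"
  shows "v \<in> supp \<mu>"
  unfolding supp_def
proof safe
  fix e :: real assume "e > 0"
  then have "emeasure \<mu> {v} \<le> emeasure \<mu> (ball v e)"
    using assms(1) by (intro emeasure_mono) auto
  moreover have "emeasure \<mu> {v} > 0" using assms(2) by (auto simp: measure_def zero_less_iff_neq_zero)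
  ultimately show "emeasure \<mu> (ball v e) > 0" by order
qed

lemma (in prob_space) rcd_atom_in_supp:
  assumes indep: "indep_set (sets G) (sigma_sets (space M) (gen_sets M Y))"
    and G: "space G = space M" and pos: "prob {\<omega>\<in>space M. Y \<omega> = v} \<noteq> 0"
    and rcd: "is_rcd M G Y \<kappa>"
  shows "AE \<omega> in M. v \<in> supp (\<kappa> \<omega>)"
proof -
  define f where "f \<omega> = measure (\<kappa> \<omega>) {v}" for \<omega>
  have f: "f \<in> borel_measurable G"
    and f_int: "\<And>A. A \<in> sets G \<Longrightarrow> (LINT \<omega>:A|M. f \<omega>) = prob (A \<inter> {\<omega>\<in>space M. Y \<omega> = v})"
    using rcd unfolding is_rcd_def f_def by (auto dest!: bspec[of _ _ "{v}"])
  define A where "A = {\<omega>\<in>space G. f \<omega> = 0}"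
  have A: "A \<in> sets G" unfolding A_def using f by measurable
  have "(\<lambda>\<omega>. indicator A \<omega> *\<^sub>R f \<omega>) = (\<lambda>_. 0)"
    by (auto simp: A_def indicator_def)
  then have "prob (A \<inter> {\<omega>\<in>space M. Y \<omega> = v}) = 0"
    using f_int[OF A] by (simp add: set_lebesgue_integral_def)
  then have "prob A = 0"
    using prob_Int_level_set[OF indep A] pos by simp
  then have "AE \<omega> in M. \<omega> \<notin> A"
    using prob_eq_0 A indep_setD_ev1[OF indep] by blast
  then show ?thesis
  proof (rule AE_mp, intro AE_I2 impI)
    fix \<omega> assume "\<omega> \<in> space M" "\<omega> \<notin> A"
    then show "v \<in> supp (\<kappa> \<omega>)"
      using rcd G by (intro in_supp_of_atom) (auto simp: A_def f_def is_rcd_def)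
  qed
qed

lemma affine_hull_real_two_points:
  fixes S :: "real set"
  assumes "a \<in> S" "b \<in> S" "a \<noteq> b"
  shows "affine hull S = UNIV"
proof -
  have "x \<in> affine hull S" for x
  proof -
    define u where "u = (x - b) / (a - b)"
    have "u *\<^sub>R a + (1 - u) *\<^sub>R b \<in> affine hull S"
      using assms(1,2) by (intro mem_affine affine_affine_hull hull_inc) auto
    moreover have "u * (a - b) = x - b"
      using assms(3) by (simp add: u_def)
    then have "u *\<^sub>R a + (1 - u) *\<^sub>R b = x"
      by (simp add: algebra_simps)
    ultimately show ?thesis by simp
  qed
  then show ?thesis by auto
qed

lemma (in prob_space) D_incl_of_two_independent_atoms:
  assumes indep: "indep_set (sets G) (sigma_sets (space M) (gen_sets M Z))"
    and G: "space G = space M" and "a \<noteq> b"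
    and "prob {\<omega>\<in>space M. Z \<omega> = a} \<noteq> 0" "prob {\<omega>\<in>space M. Z \<omega> = b} \<noteq> 0"
  shows "D_incl M G Y Z"
  unfolding D_incl_def
proof (intro allI impI)
  fix \<kappa> \<kappa>' assume "is_rcd M G Z \<kappa>'"
  then have "AE \<omega> in M. a \<in> supp (\<kappa>' \<omega>) \<and> b \<in> supp (\<kappa>' \<omega>)"
    using assms by (intro AE_conjI rcd_atom_in_supp) auto
  then show "AE \<omega> in M. affine hull supp (\<kappa> \<omega>) \<subseteq> affine hull supp (\<kappa>' \<omega>)"
    using affine_hull_real_two_points \<open>a \<noteq> b\<close> by (auto elim: AE_mp)
qed

lemma std_normal_not_AE_bounded_below:
  assumes X: "distributed M lborel X std_normal_density"
  shows "\<not> (AE \<omega> in M. b \<le> X \<omega>)"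
proof
  assume "AE \<omega> in M. b \<le> X \<omega>"
  then have "AE x in distr M lborel X. b \<le> x"
    using distributed_measurable[OF X] by (subst AE_distr_iff) auto
  then have "AE x in density lborel (\<lambda>x. ennreal (std_normal_density x)). b \<le> x"
    unfolding distributed_distr_eq_density[OF X] .
  then have "AE x in lborel. b \<le> x"
    using normal_density_pos[of 1] by (subst (asm) AE_density) (auto elim: AE_mp)
  then have "{b - 1 <..< b} \<in> null_sets lborel"
    by (subst AE_iff_null_sets) (auto elim: AE_mp)
  then have "emeasure lborel {b - 1 <..< b} = 0" by auto
  then show False by simp
qed

lemma U_le_one: "x \<le> 1 \<Longrightarrow> U x \<le> 1"
  unfolding U_def by (simp add: min_le_iff_disj)

lemma U_one: "U 1 = 1"
  unfolding U_def by simp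

lemma U_eq_two: "4 \<le> x \<Longrightarrow> U x = 2"
  using real_sqrt_le_mono[of 4 x] unfolding U_def by (simp add: min_def)

lemma U_nonneg: "0 \<le> x \<Longrightarrow> 0 \<le> U x"
  unfolding U_def by simp

lemma eexp_le_const:
  assumes "prob_space M" "\<And>\<omega>. \<omega> \<in> space M \<Longrightarrow> f \<omega> \<le> ereal c" "0 \<le> c"
  shows "eexp M f \<le> c"
proof -
  interpret prob_space M by fact
  have "(\<integral>\<^sup>+\<omega>. e2ennreal (f \<omega>) \<partial>M) \<le> (\<integral>\<^sup>+\<omega>. ennreal c \<partial>M)"
    using assms(2) by (intro nn_integral_mono) (metis e2ennreal_ereal e2ennreal_mono)
  also have "\<dots> = ennreal c" by (simp add: emeasure_space_1)
  finally have "enn2ereal (\<integral>\<^sup>+\<omega>. e2ennreal (f \<omega>) \<partial>M) \<le> ereal c"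
    using assms(3) by (metis enn2ereal_ennreal less_eq_ennreal.rep_eq)
  then show ?thesis unfolding eexp_def
    by (meson ereal_diff_le_self order_trans enn2ereal_nonneg)
qed

lemma eexp_ge:
  assumes "AE \<omega> in M. 0 \<le> f \<omega>" "ennreal a \<le> (\<integral>\<^sup>+\<omega>. e2ennreal (f \<omega>) \<partial>M)" "0 \<le> a"
  shows "ereal a \<le> eexp M f"
proof -
  have "(\<integral>\<^sup>+\<omega>. e2ennreal (- f \<omega>) \<partial>M) = 0"
    using assms(1) by (subst nn_integral_cong_AE[where v = "\<lambda>_. 0"]) (auto simp: e2ennreal_neg elim: AE_mp)
  moreover have "ereal a \<le> enn2ereal (\<integral>\<^sup>+\<omega>. e2ennreal (f \<omega>) \<partial>M)"
    using assms(2,3) by (metis enn2ereal_ennreal less_eq_ennreal.rep_eq)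
  ultimately show ?thesis unfolding eexp_def by (simp add: zero_ennreal.rep_eq)
qed

context prob_space
begin

lemma AE_two_values:
  assumes "{\<omega>\<in>space M. Y \<omega> = a} \<in> events" "{\<omega>\<in>space M. Y \<omega> = b} \<in> events" "a \<noteq> b"
    and "prob {\<omega>\<in>space M. Y \<omega> = a} + prob {\<omega>\<in>space M. Y \<omega> = b} = 1"
  shows "AE \<omega> in M. Y \<omega> = a \<or> Y \<omega> = b"
proof -
  have "prob ({\<omega>\<in>space M. Y \<omega> = a} \<union> {\<omega>\<in>space M. Y \<omega> = b}) = 1"
    using assms by (subst finite_measure_Union) auto
  then show ?thesis by (auto dest: AE_prob_1 elim: AE_mp)
qed

lemma expected_utility_ge_five_quarters:
  assumes indep: "indep_set (sets G) (sigma_sets (space M) (gen_sets M e2))"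
    and G: "space G = space M" and e1: "e1 \<in> borel_measurable G"
    and e1_vals: "AE \<omega> in M. e1 \<omega> = -1/2 \<or> e1 \<omega> = 4"
    and e2_vals: "AE \<omega> in M. e2 \<omega> = -1/2 \<or> e2 \<omega> = 1/2"
    and p: "prob {\<omega>\<in>space M. e1 \<omega> = 4} = 1/2" "prob {\<omega>\<in>space M. e1 \<omega> = -1/2} = 1/2"
      "prob {\<omega>\<in>space M. e2 \<omega> = 1/2} = 1/2"
  shows "ereal (5/4) \<le> eexp M (\<lambda>\<omega>. U (1 + e1 \<omega> + e2 \<omega>))"
proof (rule eexp_ge)
  show "AE \<omega> in M. 0 \<le> U (1 + e1 \<omega> + e2 \<omega>)"
    using e1_vals e2_vals by eventually_elim (auto intro: U_nonneg)
  define A where "A = {\<omega>\<in>space M. e1 \<omega> = 4}"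
  define B where "B = {\<omega>\<in>space M. e1 \<omega> = -1/2} \<inter> {\<omega>\<in>space M. e2 \<omega> = 1/2}"
  have "{\<omega>\<in>space G. e1 \<omega> = v} \<in> sets G" for v
    using e1 by measurable
  then have e1_level: "{\<omega>\<in>space M. e1 \<omega> = v} \<in> sets G" for v
    using G by simp
  have events: "A \<in> events" "B \<in> events"
    unfolding A_def B_def using e1_level indep_setD_ev1[OF indep]
      indep_setD_ev2[OF indep] level_set_in_gen_sets by blast+
  have "prob B = 1/4"
    unfolding B_def prob_Int_level_set[OF indep e1_level] p by simp
  have "(\<integral>\<^sup>+\<omega>. 2 * indicator A \<omega> + indicator B \<omega> \<partial>M) = 2 * ennreal (prob A) + ennreal (prob B)"
    using events by (simp add: nn_integral_add nn_integral_cmult_indicator emeasure_eq_measure)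
  also have "\<dots> = ennreal (5/4)"
    using \<open>prob B = 1/4\<close> p(1) by (simp add: A_def flip: ennreal_plus ennreal_numeral ennreal_mult)
  finally have "ennreal (5/4) = (\<integral>\<^sup>+\<omega>. 2 * indicator A \<omega> + indicator B \<omega> \<partial>M)" ..
  also have "\<dots> \<le> (\<integral>\<^sup>+\<omega>. e2ennreal (U (1 + e1 \<omega> + e2 \<omega>)) \<partial>M)"
  proof (intro nn_integral_mono_AE, use e1_vals e2_vals in eventually_elim)
    fix \<omega> assume "e1 \<omega> = -1/2 \<or> e1 \<omega> = 4" "e2 \<omega> = -1/2 \<or> e2 \<omega> = 1/2"
    then consider "e1 \<omega> = 4" "-1/2 \<le> e2 \<omega>" | "e1 \<omega> = -1/2" "e2 \<omega> = 1/2" | "\<omega> \<notin> A" "\<omega> \<notin> B"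
      unfolding A_def B_def by fastforce
    then show "2 * indicator A \<omega> + indicator B \<omega> \<le> e2ennreal (U (1 + e1 \<omega> + e2 \<omega>))"
    proof cases
      case 1
      then have "U (1 + e1 \<omega> + e2 \<omega>) = ereal 2" "\<omega> \<notin> B"
        by (auto simp: U_eq_two B_def)
      then show ?thesis by (simp add: indicator_def)
    next
      case 2
      then have "1 + e1 \<omega> + e2 \<omega> = 1" "\<omega> \<notin> A"
        by (auto simp: A_def)
      then have "U (1 + e1 \<omega> + e2 \<omega>) = ereal 1" "\<omega> \<notin> A"
        by (metis U_one one_ereal_def)+
      then show ?thesis by (simp add: indicator_def)
    qed simp
  qed
  finally show "ennreal (5/4) \<le> (\<integral>\<^sup>+\<omega>. e2ennreal (U (1 + e1 \<omega> + e2 \<omega>)) \<partial>M)" .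
qed simp

end

lemma robust_value_adm_le_one:
  assumes M: "prob_space M" and X: "distributed M lborel X std_normal_density"
    and dStil: "dStil \<in> \<S>" "dStil 1 = X"
    and dSbar: "dSbar \<in> \<S>" "dSbar 1 = (\<lambda>_. 3)" "dSbar 2 = (\<lambda>_. 0)"
  shows "robust_value M \<S> 1 (adm M G \<S> 1) \<le> 1"
  unfolding robust_value_def
proof (rule SUP_least)
  fix phi assume "phi \<in> adm M G \<S> 1"
  then have "AE \<omega> in M. 0 \<le> wealth dStil 1 phi 1 \<omega>"
    using dStil(1) unfolding adm_def by blast
  then have "AE \<omega> in M. 0 \<le> 1 + fst phi * X \<omega>"
    unfolding wealth_1 dStil(2) .
  then have "fst phi \<le> 0"
  proof (rule contrapos_pp)
    assume "\<not> fst phi \<le> 0"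
    then have "0 \<le> 1 + fst phi * x \<longleftrightarrow> - 1 / fst phi \<le> x" for x
      by (auto simp: field_simps)
    then show "\<not> (AE \<omega> in M. 0 \<le> 1 + fst phi * X \<omega>)"
      using std_normal_not_AE_bounded_below[OF X] by simp
  qed
  then have "eexp M (\<lambda>\<omega>. U (wealth dSbar 1 phi 2 \<omega>)) \<le> ereal 1"
    using dSbar by (intro eexp_le_const[OF M]) (auto simp: wealth_2 U_le_one one_ereal_def[symmetric])
  then show "(INF dS\<in>\<S>. eexp M (\<lambda>\<omega>. U (wealth dS 1 phi 2 \<omega>))) \<le> 1"
    using dSbar(1) by (simp add: INF_lower2 one_ereal_def)
qed

lemma (in prob_space) one_less_robust_value_adm_tilde:
  assumes dSstar: "dSstar 1 = e1" "dSstar 2 = e2"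
    and dStil: "\<And>\<omega>. dStil 1 \<omega> + dStil 2 \<omega> = 3" and dSbar: "\<And>\<omega>. dSbar 1 \<omega> + dSbar 2 \<omega> = 3"
    and nonneg: "AE \<omega> in M. 0 \<le> 1 + e1 \<omega> + e2 \<omega>"
    and utility: "ereal (5/4) \<le> eexp M (\<lambda>\<omega>. U (1 + e1 \<omega> + e2 \<omega>))"
  shows "1 < robust_value M {dSstar, dStil, dSbar} 1 (adm_tilde M G {dSstar, dStil, dSbar} 1)"
proof -
  define phi :: "real \<times> ('a \<Rightarrow> real)" where "phi = (1, \<lambda>_. 1)"
  have W: "wealth dS 1 phi 2 \<omega> = 1 + dS 1 \<omega> + dS 2 \<omega>" for dS \<omega>
    by (simp add: wealth_2 phi_def)
  have W_star: "wealth dSstar 1 phi 2 \<omega> = 1 + e1 \<omega> + e2 \<omega>" for \<omega>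
    unfolding W dSstar ..
  have W_tilde: "wealth dStil 1 phi 2 \<omega> = 4" and W_bar: "wealth dSbar 1 phi 2 \<omega> = 4" for \<omega>
    unfolding W using dStil[of \<omega>] dSbar[of \<omega>] by simp_all
  have "is_strategy G phi"
    by (simp add: is_strategy_def phi_def)
  moreover have "AE \<omega> in M. 0 \<le> wealth dS 1 phi 2 \<omega>" if "dS \<in> {dSstar, dStil, dSbar}" for dS
    using that nonneg by (auto simp: W_star W_tilde W_bar)
  ultimately have adm: "phi \<in> adm_tilde M G {dSstar, dStil, dSbar} 1"
    unfolding adm_tilde_def by blast
  have "ereal (5/4) \<le> eexp M (\<lambda>_. U 4)"
    using ennreal_leI[of "5/4" 2] by (intro eexp_ge) (auto simp: U_eq_two emeasure_space_1)
  then have "ereal (5/4) \<le> (INF dS\<in>{dSstar, dStil, dSbar}. eexp M (\<lambda>\<omega>. U (wealth dS 1 phi 2 \<omega>)))"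
    using utility by (simp add: W_star W_tilde W_bar)
  also have "\<dots> \<le> robust_value M {dSstar, dStil, dSbar} 1 (adm_tilde M G {dSstar, dStil, dSbar} 1)"
    unfolding robust_value_def using adm by (rule SUP_upper)
  finally show ?thesis by (rule less_le_trans[rotated]) simp
qed

theorem mainTheorem8:
  fixes M :: "'a measure" and X e1 e2 :: "'a \<Rightarrow> real"
    and dSstar dStil dSbar :: "nat \<Rightarrow> 'a \<Rightarrow> real"
  assumes "prob_space M"
    and "distributed M lborel X std_normal_density"
    and "e1 \<in> borel_measurable M" and "e2 \<in> borel_measurable M"
    and "prob_space.indep_vars M (\<lambda>_. borel) (\<lambda>i. if i = 0 then X else if i = 1 then e1 else e2) {0::nat, 1, 2}"
    and "measure M {\<omega>\<in>space M. e1 \<omega> = -1/2} = 1/2" and "measure M {\<omega>\<in>space M. e1 \<omega> = 4} = 1/2"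
    and "measure M {\<omega>\<in>space M. e2 \<omega> = -1/2} = 1/2" and "measure M {\<omega>\<in>space M. e2 \<omega> = 1/2} = 1/2"
    and "dSstar = (\<lambda>t. if t = 1 then e1 else if t = 2 then e2 else (\<lambda>_. 0))"
    and "dStil = (\<lambda>t. if t = 1 then X else if t = 2 then (\<lambda>\<omega>. 3 - X \<omega>) else (\<lambda>_. 0))"
    and "dSbar = (\<lambda>t. if t = 1 then (\<lambda>_. 3) else (\<lambda>_. 0))"
  shows "dSstar \<in> Sstar_set M X e1 {dSstar, dStil, dSbar}
    \<and> robust_value M {dSstar, dStil, dSbar} 1 (adm M (F1 M X e1) {dSstar, dStil, dSbar} 1) \<le> 1
    \<and> 1 < robust_value M {dSstar, dStil, dSbar} 1 (adm_tilde M (F1 M X e1) {dSstar, dStil, dSbar} 1)"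
proof -
  interpret prob_space M by fact
  note e1 = assms(3) and e2 = assms(4) and p = assms(6-9)
  have indep_F0_e1: "indep_set (sets (F0 M)) (sigma_sets (space M) (gen_sets M e1))"
    using gen_sets_subset_sets[OF e1] gen_sets_Int_stable by (rule indep_set_F0)
  have indep_F1_e2: "indep_set (sets (F1 M X e1)) (sigma_sets (space M) (gen_sets M e2))"
    using distributed_measurable[OF assms(2)] e1 e2 assms(5) by (intro indep_set_F1) auto
  have "NA M (F1 M X e1) dSstar"
    using indep_F1_e2 p
    by (intro NA_of_independent_symmetric_increment[where a = "-1/2" and b = 4 and r = "1/2"])
      (simp_all add: assms(10) measurable_F1)
  moreover have "D_incl M (prev_filt M X e1 t) (dS t) (dSstar t)" if "t \<in> {1, 2}" for dS t
    using that indep_F0_e1 indep_F1_e2 p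
    by (auto simp: prev_filt_def assms(10)
        intro: D_incl_of_two_independent_atoms[where a = "-1/2" and b = 4]
          D_incl_of_two_independent_atoms[where a = "-1/2" and b = "1/2"])
  ultimately have "dSstar \<in> Sstar_set M X e1 {dSstar, dStil, dSbar}"
    unfolding Sstar_set_def by blast
  moreover have "robust_value M {dSstar, dStil, dSbar} 1 (adm M (F1 M X e1) {dSstar, dStil, dSbar} 1) \<le> 1"
    by (rule robust_value_adm_le_one[OF assms(1,2), where dStil = dStil and dSbar = dSbar])
      (simp_all add: assms(11,12))
  moreover have "1 < robust_value M {dSstar, dStil, dSbar} 1 (adm_tilde M (F1 M X e1) {dSstar, dStil, dSbar} 1)"
  proof (rule one_less_robust_value_adm_tilde)
    have "AE \<omega> in M. e1 \<omega> = -1/2 \<or> e1 \<omega> = 4" "AE \<omega> in M. e2 \<omega> = -1/2 \<or> e2 \<omega> = 1/2"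
      using e1 e2 p by (intro AE_two_values; simp)+
    then show "AE \<omega> in M. 0 \<le> 1 + e1 \<omega> + e2 \<omega>"
      and "ereal (5/4) \<le> eexp M (\<lambda>\<omega>. U (1 + e1 \<omega> + e2 \<omega>))"
      using indep_F1_e2 p by (auto intro!: expected_utility_ge_five_quarters simp: measurable_F1 elim: AE_mp)
  qed (simp_all add: assms(10-12))
  ultimately show ?thesis by blast
qed

end
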